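(* Let $X$ be a set, $B=(B,+,0)$ a unitary magma, $(A,k,q,s,p)$ a retraction point from $X$ to $B$, and $\varphi(x,b,x',b')=q\big((k(x)+s(b))+(k(x')+s(b'))\big)$. Write $0$ also for $q(0)\in X$ and set, for $x,x'\in X$, $b,b'\in B$: $x+_{b'}x'=\varphi(x,0,x',b')$, $\xi^{x}(b,x')=\varphi(x,b,x',0)$, $\xi_{b'}(b,x')=\varphi(0,b,x',b')$, $\rho^{b}_{b'}(x)=\varphi(x,b,0,b')$, $x+x'=\varphi(x,0,x',0)$, $\xi(b,x')=\varphi(0,b,x',0)$, $\rho_{b'}(x)=\varphi(x,0,0,b')$. Consider the following conditions, each required for all $x,x'\in X$, $b,b'\in B$, $a\in A$: (kks) $k(x)+(k(x')+s(b))=(k(x)+k(x'))+s(b)$; (sks) $s(b)+(k(x)+s(b'))=(s(b)+k(x))+s(b')$; (1ks) $a+(k(x)+s(b))=(a+k(x))+s(b)$; (kss) $k(x)+(s(b)+s(b'))=(k(x)+s(b))+s(b')$; (ksk) $k(x)+(s(b)+k(x'))=(k(x)+s(b))+k(x')$; (ks1) $k(x)+(s(b)+a)=(k(x)+s(b))+a$. Then, for all $x,x'\in X$ and $b,b'\in B$: 1. if (kks) holds, then $x+_{b'}x'=\rho_{b'}(x+x')$; 2. if (sks) holds, then $\xi_{b'}(b,x')=\rho^{b}_{b'}(\xi(b,x'))$; 3. if (1ks) holds, then $\varphi(x,b,x',b')=\rho^{b}_{b'}(\xi^{x}(b,x'))$; 4. if (kss) holds, then $\rho^{b}_{b'}(x)=\rho_{b+b'}(x)$;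 5. if (ksk) holds, then $\xi^{x}(b,x')=x+_{b}\xi(b,x')$; 6. if (ks1) holds, then $\varphi(x,b,x',b')=x+_{b+b'}\xi_{b'}(b,x')$; 7. if (kks) and (ksk) hold, then $\xi^{x}(b,x')=\rho_{b}(x+\xi(b,x'))$; 8. if (sks) and (kss) hold, then $\xi_{b'}(b,x')=\rho_{b+b'}(\xi(b,x'))$; 9. if (1ks), (kss) and (ksk) hold, then $\varphi(x,b,x',b')=\rho_{b+b'}(x+\xi(b,x'))$; 10. if (ks1), (kks) and (sks) hold, then $\varphi(x,b,x',b')=\rho_{b+b'}(x+\xi(b,x'))$.
   Context: A unitary magma is a set with a binary operation $+$ and an element $0$ with $b+0=b=0+b$ for all $b$; morphisms preserve $+$ and $0$. Given a set $X$ and a unitary magma $B$, a retraction point from $X$ to $B$ is a tuple $(A,k,q,s,p)$ where $A=(A,+,0)$ is a unitary magma, $k\colon X\to A$ and $q\colon A\to X$ are maps, $s\colon B\to A$ and $p\colon A\to B$ are morphisms of unitary magmas, and $p(s(b))=b$, $q(k(x))=x$, $p(k(x))=0$, $q(s(b))=q(0)$, and $k(q(a))+s(p(a))=a$ for all $x\in X$, $b\in B$, $a\in A$. *)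

theory Defs
  imports Main
begin

definition unitary_magma :: "('m \<Rightarrow> 'm \<Rightarrow> 'm) \<Rightarrow> 'm \<Rightarrow> bool" where
  "unitary_magma add z \<longleftrightarrow> (\<forall>b. add b z = b \<and> add z b = b)"

definition magma_morphism ::
  "('m \<Rightarrow> 'm \<Rightarrow> 'm) \<Rightarrow> 'm \<Rightarrow> ('n \<Rightarrow> 'n \<Rightarrow> 'n) \<Rightarrow> 'n \<Rightarrow> ('m \<Rightarrow> 'n) \<Rightarrow> bool" where
  "magma_morphism addM zM addN zN f \<longleftrightarrow>
     (\<forall>u v. f (addM u v) = addN (f u) (f v)) \<and> f zM = zN"

definition retraction_point ::
  "('b \<Rightarrow> 'b \<Rightarrow> 'b) \<Rightarrow> 'b \<Rightarrow> ('a \<Rightarrow> 'a \<Rightarrow> 'a) \<Rightarrow> 'a \<Rightarrow>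
   ('x \<Rightarrow> 'a) \<Rightarrow> ('a \<Rightarrow> 'x) \<Rightarrow> ('b \<Rightarrow> 'a) \<Rightarrow> ('a \<Rightarrow> 'b) \<Rightarrow> bool" where
  "retraction_point addB zB addA zA k q s p \<longleftrightarrow>
     unitary_magma addB zB \<and> unitary_magma addA zA \<and>
     magma_morphism addB zB addA zA s \<and> magma_morphism addA zA addB zB p \<and>
     (\<forall>b. p (s b) = b) \<and> (\<forall>x. q (k x) = x) \<and> (\<forall>x. p (k x) = zB) \<and>
     (\<forall>b. q (s b) = q zA) \<and> (\<forall>a. addA (k (q a)) (s (p a)) = a)"

definition phi ::
  "('a \<Rightarrow> 'a \<Rightarrow> 'a) \<Rightarrow> ('x \<Rightarrow> 'a) \<Rightarrow> ('a \<Rightarrow> 'x) \<Rightarrow> ('b \<Rightarrow> 'a) \<Rightarrow>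
   'x \<Rightarrow> 'b \<Rightarrow> 'x \<Rightarrow> 'b \<Rightarrow> 'x" where
  "phi addA k q s x b x' b' = q (addA (addA (k x) (s b)) (addA (k x') (s b')))"

end

theory Submission
  imports Defs
begin

(* Every a in A decomposes as k (q a) + s (p a), so k (q c) + s b = c whenever p c = b, and
   k (q c) = c whenever p c = 0. Unfolding \<phi> and collapsing such subterms turns each identity
   into a rebracketing of a sum of k's and s's, which is exactly what the corresponding
   associativity conditions provide. *)

locale retraction_point_structure =
  fixes addB :: "'b \<Rightarrow> 'b \<Rightarrow> 'b" (infixl "\<boxplus>" 65) and zB :: 'b
    and addA :: "'a \<Rightarrow> 'a \<Rightarrow> 'a" (infixl "\<oplus>" 65) and zA :: 'a
    and k :: "'x \<Rightarrow> 'a" and q :: "'a \<Rightarrow> 'x"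
    and s :: "'b \<Rightarrow> 'a" and p :: "'a \<Rightarrow> 'b"
  assumes retraction_point: "retraction_point addB zB addA zA k q s p"
begin

abbreviation zX :: 'x where "zX \<equiv> q zA"

abbreviation plus_sub :: "'x \<Rightarrow> 'b \<Rightarrow> 'x \<Rightarrow> 'x"
  where "plus_sub x b' x' \<equiv> phi addA k q s x zB x' b'"

abbreviation xi_sup :: "'x \<Rightarrow> 'b \<Rightarrow> 'x \<Rightarrow> 'x"
  where "xi_sup x b x' \<equiv> phi addA k q s x b x' zB"

abbreviation xi_sub :: "'b \<Rightarrow> 'b \<Rightarrow> 'x \<Rightarrow> 'x"
  where "xi_sub b' b x' \<equiv> phi addA k q s zX b x' b'"

abbreviation rho_sup_sub :: "'b \<Rightarrow> 'b \<Rightarrow> 'x \<Rightarrow> 'x"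
  where "rho_sup_sub b b' x \<equiv> phi addA k q s x b zX b'"

abbreviation plus_X :: "'x \<Rightarrow> 'x \<Rightarrow> 'x"
  where "plus_X x x' \<equiv> phi addA k q s x zB x' zB"

abbreviation xi :: "'b \<Rightarrow> 'x \<Rightarrow> 'x"
  where "xi b x' \<equiv> phi addA k q s zX b x' zB"

abbreviation rho :: "'b \<Rightarrow> 'x \<Rightarrow> 'x"
  where "rho b' x \<equiv> phi addA k q s x zB zX b'"

lemma
  shows add_zB [simp]: "b \<boxplus> zB = b" and zB_add [simp]: "zB \<boxplus> b = b"
    and add_zA [simp]: "a \<oplus> zA = a" and zA_add [simp]: "zA \<oplus> a = a"
    and s_add: "s (b \<boxplus> b') = s b \<oplus> s b'" and s_zB [simp]: "s zB = zA"
    and p_add [simp]: "p (a \<oplus> a') = p a \<boxplus> p a'" and p_zA [simp]: "p zA = zB"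
    and p_s [simp]: "p (s b) = b" and p_k [simp]: "p (k x) = zB"
    and k_q_add_s_p: "k (q a) \<oplus> s (p a) = a"
  using retraction_point
  unfolding retraction_point_def unitary_magma_def magma_morphism_def by auto

lemma k_q_add_s: "p a = b \<Longrightarrow> k (q a) \<oplus> s b = a"
  using k_q_add_s_p by blast

lemma k_q: "p a = zB \<Longrightarrow> k (q a) = a"
  using k_q_add_s[of a zB] by simp

lemma k_zX [simp]: "k zX = zA"
  by (simp add: k_q)

lemma k_xi_add_s: "k (xi b x') \<oplus> s b = s b \<oplus> k x'"
  by (simp add: phi_def k_q_add_s)

lemma plus_sub_eq_rho_plus:
  assumes kks: "\<And>x x' b. k x \<oplus> (k x' \<oplus> s b) = (k x \<oplus> k x') \<oplus> s b"
  shows "plus_sub x b' x' = rho b' (plus_X x x')"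
  by (simp add: phi_def k_q k_q_add_s kks)

lemma xi_sub_eq_rho_sup_sub_xi:
  assumes sks: "\<And>x b b'. s b \<oplus> (k x \<oplus> s b') = (s b \<oplus> k x) \<oplus> s b'"
  shows "xi_sub b' b x' = rho_sup_sub b b' (xi b x')"
  by (simp add: phi_def k_q k_q_add_s sks)

lemma phi_eq_rho_sup_sub_xi_sup:
  assumes oneks: "\<And>a x b. a \<oplus> (k x \<oplus> s b) = (a \<oplus> k x) \<oplus> s b"
  shows "phi addA k q s x b x' b' = rho_sup_sub b b' (xi_sup x b x')"
  by (simp add: phi_def k_q k_q_add_s oneks)

lemma rho_sup_sub_eq_rho:
  assumes kss: "\<And>x b b'. k x \<oplus> (s b \<oplus> s b') = (k x \<oplus> s b) \<oplus> s b'"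
  shows "rho_sup_sub b b' x = rho (b \<boxplus> b') x"
  by (simp add: phi_def s_add kss)

lemma xi_sup_eq_plus_sub_xi:
  assumes ksk: "\<And>x b x'. k x \<oplus> (s b \<oplus> k x') = (k x \<oplus> s b) \<oplus> k x'"
  shows "xi_sup x b x' = plus_sub x b (xi b x')"
  by (simp add: phi_def k_q k_q_add_s ksk)

lemma phi_eq_plus_sub_xi_sub:
  assumes ksone: "\<And>x b a. k x \<oplus> (s b \<oplus> a) = (k x \<oplus> s b) \<oplus> a"
  shows "phi addA k q s x b x' b' = plus_sub x (b \<boxplus> b') (xi_sub b' b x')"
  by (simp add: phi_def k_q k_q_add_s ksone)

lemma xi_sup_eq_rho_plus_xi:
  assumes "\<And>x x' b. k x \<oplus> (k x' \<oplus> s b) = (k x \<oplus> k x') \<oplus> s b"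
    and "\<And>x b x'. k x \<oplus> (s b \<oplus> k x') = (k x \<oplus> s b) \<oplus> k x'"
  shows "xi_sup x b x' = rho b (plus_X x (xi b x'))"
  using xi_sup_eq_plus_sub_xi[OF assms(2)] plus_sub_eq_rho_plus[OF assms(1)] by (rule trans)

lemma xi_sub_eq_rho_xi:
  assumes "\<And>x b b'. s b \<oplus> (k x \<oplus> s b') = (s b \<oplus> k x) \<oplus> s b'"
    and "\<And>x b b'. k x \<oplus> (s b \<oplus> s b') = (k x \<oplus> s b) \<oplus> s b'"
  shows "xi_sub b' b x' = rho (b \<boxplus> b') (xi b x')"
  using xi_sub_eq_rho_sup_sub_xi[OF assms(1)] rho_sup_sub_eq_rho[OF assms(2)] by (rule trans)

lemma phi_eq_rho_plus_xi_1ks: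
  assumes oneks: "\<And>a x b. a \<oplus> (k x \<oplus> s b) = (a \<oplus> k x) \<oplus> s b"
    and kss: "\<And>x b b'. k x \<oplus> (s b \<oplus> s b') = (k x \<oplus> s b) \<oplus> s b'"
    and ksk: "\<And>x b x'. k x \<oplus> (s b \<oplus> k x') = (k x \<oplus> s b) \<oplus> k x'"
  shows "phi addA k q s x b x' b' = rho (b \<boxplus> b') (plus_X x (xi b x'))"
proof -
  have "rho (b \<boxplus> b') (plus_X x (xi b x')) = rho_sup_sub b b' (plus_X x (xi b x'))"
    by (rule rho_sup_sub_eq_rho[OF kss, symmetric])
  also have "\<dots> = q (((k x \<oplus> k (xi b x')) \<oplus> s b) \<oplus> s b')"
    by (simp add: phi_def k_q)
  also have "(k x \<oplus> k (xi b x')) \<oplus> s b = k x \<oplus> (s b \<oplus> k x')"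
    by (simp add: k_xi_add_s flip: oneks)
  also have "\<dots> = (k x \<oplus> s b) \<oplus> k x'"
    by (rule ksk)
  also have "q (((k x \<oplus> s b) \<oplus> k x') \<oplus> s b') = phi addA k q s x b x' b'"
    by (simp add: phi_def oneks)
  finally show ?thesis ..
qed

lemma phi_eq_rho_plus_xi_ks1:
  assumes ksone: "\<And>x b a. k x \<oplus> (s b \<oplus> a) = (k x \<oplus> s b) \<oplus> a"
    and kks: "\<And>x x' b. k x \<oplus> (k x' \<oplus> s b) = (k x \<oplus> k x') \<oplus> s b"
    and sks: "\<And>x b b'. s b \<oplus> (k x \<oplus> s b') = (s b \<oplus> k x) \<oplus> s b'"
  shows "phi addA k q s x b x' b' = rho (b \<boxplus> b') (plus_X x (xi b x'))"
proof -
  have "rho (b \<boxplus> b') (plus_X x (xi b x')) = q ((k x \<oplus> k (xi b x')) \<oplus> s (b \<boxplus> b'))"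
    by (simp add: phi_def k_q)
  also have "\<dots> = q (k x \<oplus> (k (xi b x') \<oplus> s (b \<boxplus> b')))"
    by (simp only: kks)
  also have "k (xi b x') \<oplus> s (b \<boxplus> b') = (k (xi b x') \<oplus> s b) \<oplus> s b'"
    by (simp add: s_add ksone)
  also have "\<dots> = s b \<oplus> (k x' \<oplus> s b')"
    by (simp add: k_xi_add_s sks)
  also have "q (k x \<oplus> (s b \<oplus> (k x' \<oplus> s b'))) = phi addA k q s x b x' b'"
    by (simp add: phi_def ksone)
  finally show ?thesis ..
qed

end

theorem proposition6p1:
  fixes addB :: "'b \<Rightarrow> 'b \<Rightarrow> 'b" and zB :: 'b
    and addA :: "'a \<Rightarrow> 'a \<Rightarrow> 'a" and zA :: 'a
    and k :: "'x \<Rightarrow> 'a" and q :: "'a \<Rightarrow> 'x"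
    and s :: "'b \<Rightarrow> 'a" and p :: "'a \<Rightarrow> 'b"
  assumes RP: "retraction_point addB zB addA zA k q s p"
  defines "\<phi> \<equiv> phi addA k q s"
  defines "kks \<equiv> \<forall>x x' b. addA (k x) (addA (k x') (s b)) = addA (addA (k x) (k x')) (s b)"
    and "sks \<equiv> \<forall>x b b'. addA (s b) (addA (k x) (s b')) = addA (addA (s b) (k x)) (s b')"
    and "oneks \<equiv> \<forall>a x b. addA a (addA (k x) (s b)) = addA (addA a (k x)) (s b)"
    and "kss \<equiv> \<forall>x b b'. addA (k x) (addA (s b) (s b')) = addA (addA (k x) (s b)) (s b')"
    and "ksk \<equiv> \<forall>x b x'. addA (k x) (addA (s b) (k x')) = addA (addA (k x) (s b)) (k x')"
    and "ksone \<equiv> \<forall>x b a. addA (k x) (addA (s b) a) = addA (addA (k x) (s b)) a"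
  defines "X0 \<equiv> q zA"
  defines "plusb \<equiv> \<lambda>x b' x'. \<phi> x zB x' b'"
    and "xiup \<equiv> \<lambda>x b x'. \<phi> x b x' zB"
    and "xidown \<equiv> \<lambda>b' b x'. \<phi> X0 b x' b'"
    and "rhoud \<equiv> \<lambda>b b' x. \<phi> x b X0 b'"
    and "plusX \<equiv> \<lambda>x x'. \<phi> x zB x' zB"
    and "xi \<equiv> \<lambda>b x'. \<phi> X0 b x' zB"
    and "rho \<equiv> \<lambda>b' x. \<phi> x zB X0 b'"
  shows
    "(kks \<longrightarrow> (\<forall>x x' b'. plusb x b' x' = rho b' (plusX x x'))) \<and>
     (sks \<longrightarrow> (\<forall>x' b b'. xidown b' b x' = rhoud b b' (xi b x'))) \<and>
     (oneks \<longrightarrow> (\<forall>x x' b b'. \<phi> x b x' b' = rhoud b b' (xiup x b x'))) \<and>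
     (kss \<longrightarrow> (\<forall>x b b'. rhoud b b' x = rho (addB b b') x)) \<and>
     (ksk \<longrightarrow> (\<forall>x x' b. xiup x b x' = plusb x b (xi b x'))) \<and>
     (ksone \<longrightarrow> (\<forall>x x' b b'. \<phi> x b x' b' = plusb x (addB b b') (xidown b' b x'))) \<and>
     (kks \<and> ksk \<longrightarrow> (\<forall>x x' b. xiup x b x' = rho b (plusX x (xi b x')))) \<and>
     (sks \<and> kss \<longrightarrow> (\<forall>x' b b'. xidown b' b x' = rho (addB b b') (xi b x'))) \<and>
     (oneks \<and> kss \<and> ksk \<longrightarrow>
        (\<forall>x x' b b'. \<phi> x b x' b' = rho (addB b b') (plusX x (xi b x')))) \<and>
     (ksone \<and> kks \<and> sks \<longrightarrow>
        (\<forall>x x' b b'. \<phi> x b x' b' = rho (addB b b') (plusX x (xi b x'))))"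
proof -
  interpret retraction_point_structure addB zB addA zA k q s p
    using RP by (rule retraction_point_structure.intro)
  show ?thesis
    unfolding kks_def sks_def oneks_def kss_def ksk_def ksone_def \<phi>_def X0_def
      plusb_def xiup_def xidown_def rhoud_def plusX_def xi_def rho_def
    by (blast intro: plus_sub_eq_rho_plus xi_sub_eq_rho_sup_sub_xi phi_eq_rho_sup_sub_xi_sup
      rho_sup_sub_eq_rho xi_sup_eq_plus_sub_xi phi_eq_plus_sub_xi_sub xi_sup_eq_rho_plus_xi
      xi_sub_eq_rho_xi phi_eq_rho_plus_xi_1ks phi_eq_rho_plus_xi_ks1)
qed

end
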